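(* Let $\mathcal{D}\subset\mathbb{R}^N$ be open, bounded, connected. If $y_0\in\partial\mathcal{D}$ is not walk-regular, then there exists a continuous function $F:\partial\mathcal{D}\to\mathbb{R}$ such that the functions $u^\epsilon(x)=\mathbb{E}[F\circ X^{\epsilon,x}]$ satisfy $\limsup_{x\to y_0,\,\epsilon\to0}u^\epsilon(x)\ne F(y_0)$.
   Context: Probability space: $\Omega_1=B_1(0)\subset\mathbb{R}^N$ with Borel $\sigma$-algebra and normalised Lebesgue measure; $(\Omega,\mathcal{F},\mathbb{P})$ is the countable product $\Omega=(\Omega_1)^{\mathbb{N}}$, $\omega=\{w_i\}_{i\ge1}$. The $\epsilon$-ball walk started at $x\in\mathcal{D}$: $X_0^{\epsilon,x}\equiv x$, $X_n^{\epsilon,x}=X_{n-1}^{\epsilon,x}+\big(\epsilon\wedge\operatorname{dist}(X_{n-1}^{\epsilon,x},\partial\mathcal{D})\big)w_n$ for $n\ge1$; it converges $\mathbb{P}$-a.s. to a random variable $X^{\epsilon,x}:\Omega\to\partial\mathcal{D}$. A point $y_0\in\partial\mathcal{D}$ is walk-regular if for every $\eta,\delta>0$ there exist $\hat\delta\in(0,\delta)$ and $\hat\epsilon\in(0,1)$ such that $\mathbb{P}(X^{\epsilon,x_0}\in B_\delta(y_0))\ge1-\eta$ for all $\epsilon\in(0,\hat\epsilon)$ and all $x_0\in B_{\hat\delta}(y_0)\cap\mathcal{D}$. *)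

theory Defs
  imports "HOL-Probability.Probability"
begin

text \<open>Probability space: countable product of the normalised Lebesgue measure
on the unit ball. A sample is \<omega> :: nat \<Rightarrow> 'a; the paper's w_i (i \<ge> 1) is \<omega> (i - 1).\<close>

definition walk_space :: "(nat \<Rightarrow> 'a::euclidean_space) measure" where
  "walk_space = PiM UNIV (\<lambda>_. uniform_measure lborel (ball 0 1))"

fun ball_walk :: "'a::euclidean_space set \<Rightarrow> real \<Rightarrow> 'a \<Rightarrow> nat \<Rightarrow> (nat \<Rightarrow> 'a) \<Rightarrow> 'a" where
  "ball_walk D \<epsilon> x 0 \<omega> = x"
| "ball_walk D \<epsilon> x (Suc n) \<omega> =
     ball_walk D \<epsilon> x n \<omega> + min \<epsilon> (infdist (ball_walk D \<epsilon> x n \<omega>) (frontier D)) *\<^sub>R \<omega> n"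

text \<open>The (almost surely existing) limit X^{eps,x} of the walk.\<close>

definition walk_limit :: "'a::euclidean_space set \<Rightarrow> real \<Rightarrow> 'a \<Rightarrow> (nat \<Rightarrow> 'a) \<Rightarrow> 'a" where
  "walk_limit D \<epsilon> x \<omega> = lim (\<lambda>n. ball_walk D \<epsilon> x n \<omega>)"

definition walk_regular :: "'a::euclidean_space set \<Rightarrow> 'a \<Rightarrow> bool" where
  "walk_regular D y0 \<longleftrightarrow>
     (\<forall>\<eta>>0. \<forall>\<delta>>0. \<exists>\<delta>'. 0 < \<delta>' \<and> \<delta>' < \<delta> \<and> (\<exists>\<epsilon>'. 0 < \<epsilon>' \<and> \<epsilon>' < 1 \<and>
        (\<forall>\<epsilon>. 0 < \<epsilon> \<and> \<epsilon> < \<epsilon>' \<longrightarrow> (\<forall>x0 \<in> ball y0 \<delta>' \<inter> D.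
           measure walk_space {\<omega> \<in> space walk_space. walk_limit D \<epsilon> x0 \<omega> \<in> ball y0 \<delta>} \<ge> 1 - \<eta>))))"

definition walk_value :: "'a::euclidean_space set \<Rightarrow> ('a \<Rightarrow> real) \<Rightarrow> real \<Rightarrow> 'a \<Rightarrow> real" where
  "walk_value D F \<epsilon> x = (\<integral>\<omega>. F (walk_limit D \<epsilon> x \<omega>) \<partial>walk_space)"

end

theory Submission
  imports Defs
begin

text \<open>If y0 is not walk-regular, there are \<eta>, \<delta> > 0 and starting points x arbitrarily close to
  y0, with arbitrarily small step sizes \<epsilon>, from which the walk leaves the ball of radius \<delta>
  around y0 with probability more than \<eta>. The boundary datum F y = min 1 (|y - y0| / \<delta>)
  vanishes at y0 and dominates the indicator of the complement of that ball, so u^\<epsilon>(x) > \<eta>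
  at all these points and the limsup is at least \<eta> > 0 = F y0.\<close>

lemma prob_space_walk_space: "prob_space (walk_space :: (nat \<Rightarrow> 'a::euclidean_space) measure)"
proof -
  have "emeasure lborel (ball (0::'a) 1) \<noteq> 0"
  proof -
    have "unit_ball_vol (real DIM('a)) > 0" by simp
    then show ?thesis by (simp add: emeasure_ball del: unit_ball_vol_pos)
  qed
  moreover have "emeasure lborel (ball (0::'a) 1) \<noteq> \<infinity>"
    using emeasure_lborel_ball_finite by (metis less_irrefl)
  ultimately show ?thesis
    unfolding walk_space_def by (intro prob_space_PiM prob_space_uniform_measure)
qed

lemma measurable_walk_space_component [measurable]:
  "(\<lambda>\<omega>. \<omega> n) \<in> borel_measurable walk_space"
proof -
  have "(\<lambda>\<omega>. \<omega> n) \<in> walk_space \<rightarrow>\<^sub>M uniform_measure lborel (ball 0 1)"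
    unfolding walk_space_def by (rule measurable_component_singleton) simp
  then show ?thesis
    by (simp cong: measurable_cong_sets)
qed

lemma ball_walk_measurable [measurable]:
  "ball_walk D \<epsilon> x n \<in> borel_measurable walk_space"
proof (induction n)
  case 0
  then show ?case by simp
next
  case (Suc n)
  have "(\<lambda>\<omega>. infdist (ball_walk D \<epsilon> x n \<omega>) (frontier D)) \<in> borel_measurable walk_space"
    by (rule measurable_compose[OF Suc.IH borel_measurable_continuous_onI])
       (intro continuous_intros)
  with Suc.IH show ?case by simp
qed

lemma walk_limit_measurable:
  "walk_limit D \<epsilon> x \<in> borel_measurable walk_space"
  unfolding walk_limit_def[abs_def] by (rule borel_measurable_lim_metric) simp

lemma (in prob_space) prob_not_in_ball_le_expectation:
  fixes X :: "'a \<Rightarrow> 'b::metric_space"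
  assumes X: "X \<in> borel_measurable M" and "\<delta> > 0"
  shows "1 - prob {\<omega> \<in> space M. X \<omega> \<in> ball y \<delta>} \<le> expectation (\<lambda>\<omega>. min 1 (dist y (X \<omega>) / \<delta>))"
proof -
  let ?S = "{\<omega> \<in> space M. X \<omega> \<in> ball y \<delta>}"
  have "?S = X -` ball y \<delta> \<inter> space M" by auto
  then have S: "?S \<in> events" using measurable_sets[OF X] by simp
  have "1 - prob ?S = expectation (indicator (space M - ?S))"
    using S by (simp add: prob_compl)
  also have "\<dots> \<le> expectation (\<lambda>\<omega>. min 1 (dist y (X \<omega>) / \<delta>))"
  proof (rule integral_mono)
    show "integrable M (indicator (space M - ?S) :: _ \<Rightarrow> real)"
      using S by (intro integrable_real_indicator) (auto simp: emeasure_eq_measure)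
    have "(\<lambda>\<omega>. min 1 (dist y (X \<omega>) / \<delta>)) \<in> borel_measurable M"
      by (rule measurable_compose[OF X borel_measurable_continuous_onI]) (use \<open>\<delta> > 0\<close> in \<open>intro continuous_intros; simp\<close>)
    then show "integrable M (\<lambda>\<omega>. min 1 (dist y (X \<omega>) / \<delta>))"
      using \<open>\<delta> > 0\<close> by (intro integrable_const_bound[where B=1]) auto
    show "indicator (space M - ?S) \<omega> \<le> min 1 (dist y (X \<omega>) / \<delta>)" for \<omega>
      using \<open>\<delta> > 0\<close> by (auto simp: indicator_def field_simps)
  qed
  finally show ?thesis .
qed

lemma walk_escape_prob_le_walk_value:
  assumes "\<delta> > 0"
  shows "1 - measure walk_space {\<omega> \<in> space walk_space. walk_limit D \<epsilon> x \<omega> \<in> ball y0 \<delta>}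
           \<le> walk_value D (\<lambda>y. min 1 (dist y0 y / \<delta>)) \<epsilon> x"
  unfolding walk_value_def
  using prob_space.prob_not_in_ball_le_expectation[OF prob_space_walk_space walk_limit_measurable assms]
  by simp

lemma frequently_at_within_Times_greaterThan:
  fixes a :: "'a::metric_space"
  assumes "\<delta> > 0"
    and P: "\<And>\<delta>' \<epsilon>'. 0 < \<delta>' \<Longrightarrow> \<delta>' < \<delta> \<Longrightarrow> 0 < \<epsilon>' \<Longrightarrow> \<epsilon>' < 1 \<Longrightarrow>
              \<exists>\<epsilon>. 0 < \<epsilon> \<and> \<epsilon> < \<epsilon>' \<and> (\<exists>x \<in> ball a \<delta>' \<inter> S. P x \<epsilon>)"
  shows "\<exists>\<^sub>F (x, \<epsilon>) in at (a, 0::real) within S \<times> {0<..}. P x \<epsilon>"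
  unfolding frequently_at
proof (intro allI impI)
  fix d :: real assume "d > 0"
  have "\<exists>\<epsilon>. 0 < \<epsilon> \<and> \<epsilon> < min (1/2) (d/2) \<and> (\<exists>x \<in> ball a (min (\<delta>/2) (d/2)) \<inter> S. P x \<epsilon>)"
    by (rule P) (use \<open>\<delta> > 0\<close> \<open>d > 0\<close> in auto)
  then obtain \<epsilon> x where \<epsilon>: "0 < \<epsilon>" "\<epsilon> < d/2" and x: "dist a x < d/2" "x \<in> S" and "P x \<epsilon>"
    by auto
  moreover have "dist (x, \<epsilon>) (a, 0) < d"
    unfolding dist_Pair_Pair
    by (rule sqrt_sum_squares_half_less) (use \<epsilon> x in \<open>auto simp: dist_commute\<close>)
  ultimately show "\<exists>z\<in>S \<times> {0<..}. z \<noteq> (a, 0) \<and> dist z (a, 0) < d \<and> (case z of (x, \<epsilon>) \<Rightarrow> P x \<epsilon>)"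
    by (intro bexI[of _ "(x, \<epsilon>)"]) auto
qed

lemma not_walk_regular_escapes_frequently:
  assumes "\<not> walk_regular D y0"
  obtains \<eta> \<delta> where "\<eta> > 0" "\<delta> > 0"
    "\<exists>\<^sub>F (x, \<epsilon>) in at (y0, 0) within D \<times> {0<..}.
       measure walk_space {\<omega> \<in> space walk_space. walk_limit D \<epsilon> x \<omega> \<in> ball y0 \<delta>} < 1 - \<eta>"
proof -
  from assms obtain \<eta> \<delta> where "\<eta> > 0" "\<delta> > 0" and escape:
    "\<And>\<delta>' \<epsilon>'. 0 < \<delta>' \<Longrightarrow> \<delta>' < \<delta> \<Longrightarrow> 0 < \<epsilon>' \<Longrightarrow> \<epsilon>' < 1 \<Longrightarrow>
      \<exists>\<epsilon>. 0 < \<epsilon> \<and> \<epsilon> < \<epsilon>' \<and> (\<exists>x \<in> ball y0 \<delta>' \<inter> D.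
           measure walk_space {\<omega> \<in> space walk_space. walk_limit D \<epsilon> x \<omega> \<in> ball y0 \<delta>} < 1 - \<eta>)"
    unfolding walk_regular_def by (auto simp: not_le)
  with frequently_at_within_Times_greaterThan[OF \<open>\<delta> > 0\<close> escape] that show ?thesis
    by blast
qed

lemma le_Limsup_frequently:
  fixes f :: "_ \<Rightarrow> 'a::complete_linorder"
  assumes "\<exists>\<^sub>F x in F. P x" and "\<And>x. P x \<Longrightarrow> c \<le> f x"
  shows "c \<le> Limsup F f"
proof (rule Limsup_greatest)
  fix Q assume "eventually Q F"
  with assms(1) have "\<exists>\<^sub>F x in F. Q x \<and> P x"
    by (rule frequently_eventually_conj)
  then obtain x where "Q x" "P x"
    by (auto elim: frequentlyE)
  then show "c \<le> (SUP x\<in>Collect Q. f x)"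
    using assms(2) by (auto intro: SUP_upper2)
qed

theorem lemma2p15:
  fixes D :: "'a::euclidean_space set" and y0 :: 'a
  assumes "open D" and "bounded D" and "connected D"
    and "y0 \<in> frontier D"
    and "\<not> walk_regular D y0"
  shows "\<exists>F :: 'a \<Rightarrow> real. continuous_on (frontier D) F \<and>
           Limsup (at (y0, 0) within (D \<times> {0<..})) (\<lambda>(x, \<epsilon>). ereal (walk_value D F \<epsilon> x))
             \<noteq> ereal (F y0)"
proof -
  obtain \<eta> \<delta> where "\<eta> > 0" "\<delta> > 0" and escapes:
    "\<exists>\<^sub>F (x, \<epsilon>) in at (y0, 0) within D \<times> {0<..}.
       measure walk_space {\<omega> \<in> space walk_space. walk_limit D \<epsilon> x \<omega> \<in> ball y0 \<delta>} < 1 - \<eta>"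
    using not_walk_regular_escapes_frequently[OF assms(5)] by blast
  define F where "F y = min 1 (dist y0 y / \<delta>)" for y
  have "continuous_on (frontier D) F"
    unfolding F_def using \<open>\<delta> > 0\<close> by (intro continuous_intros) auto
  moreover have "ereal (F y0) < Limsup (at (y0, 0) within D \<times> {0<..}) (\<lambda>(x, \<epsilon>). ereal (walk_value D F \<epsilon> x))"
  proof (rule less_le_trans)
    show "ereal (F y0) < ereal \<eta>"
      using \<open>\<eta> > 0\<close> by (simp add: F_def)
    show "ereal \<eta> \<le> Limsup (at (y0, 0) within D \<times> {0<..}) (\<lambda>(x, \<epsilon>). ereal (walk_value D F \<epsilon> x))"
    proof (rule le_Limsup_frequently[OF escapes], clarify)
      fix x \<epsilon>
      assume "measure walk_space {\<omega> \<in> space walk_space. walk_limit D \<epsilon> x \<omega> \<in> ball y0 \<delta>} < 1 - \<eta>"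
      with walk_escape_prob_le_walk_value[OF \<open>\<delta> > 0\<close>, of D \<epsilon> x y0]
      show "ereal \<eta> \<le> ereal (walk_value D F \<epsilon> x)"
        unfolding F_def by simp
    qed
  qed
  ultimately show ?thesis
    by (blast dest: dual_order.strict_implies_not_eq)
qed

end
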